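(* Consider an instance of the food delivery problem with $k$ vehicles and capacity $c$ on a graph $G=(V,E)$ with depot $o$, and let $F$ be at least the optimum offline maximum flow time. Let $a\le b$ and let $R'$ be the set of requests arriving in time $[a,b]$. Then the optimum CVRP tour with capacity $c$ for the requests $R'$ (each request having pickup location equal to its delivery location) has length at most $k(b-a+2F)$.
   Context: An FDP instance consists of a connected undirected graph $G=(V,E)$ with edge lengths $\ell:E\to\mathbb{R}_{>0}$, a depot $o\in V$, $k\ge 1$ unit-speed vehicles initially at $o$, capacity $c\in\mathbb{Z}_{>0}\cup\{\infty\}$, and requests $\rho=(r_\rho,v_\rho)$ with arrival time $r_\rho\ge0$ and delivery location $v_\rho$. A trip is a triple $(t,(u_0=o,u_1,\dots,u_z=o),R'')$ with start time $t$, a closed walk in $G$ with $u_j\ne o$ for $1\le j\le z-1$, and a set $R''$ of at most $c$ requests with $r_\rho\le t$ whose locations appear on the walk; $\rho$ is served when the walk first reaches $v_\rho$. Each vehicle performs a sequence of trips, each starting no earlier than the previous one completes; each request is served by exactly one trip; the flow time of $\rho$ is its service time minus $r_\rho$, and the objective is the maximum flow time. CVRP: given $G,\ell,o,c$ and requests with pickup locations, find a minimum-length closed walk $(o,u_1,\dots,u_z,o)$ and sets $Q_j$ of requests with pickup location $u_j$ partitioning the requests such that for every $1\le j\le j'\le z$ with $u_i\ne o$ for all $i\in[j,j']$, $|\bigcup_{i=j}^{j'}Q_i|\le c$. *)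

theory Defs
  imports Main "HOL-Library.Extended_Nat"
begin

definition is_walk :: "'v set set \<Rightarrow> 'v list \<Rightarrow> bool" where
  "is_walk E ws \<longleftrightarrow> ws \<noteq> [] \<and> (\<forall>i. Suc i < length ws \<longrightarrow> {ws ! i, ws ! Suc i} \<in> E)"

definition walk_len :: "('v set \<Rightarrow> real) \<Rightarrow> 'v list \<Rightarrow> real" where
  "walk_len l ws = (\<Sum>i < length ws - 1. l {ws ! i, ws ! Suc i})"

definition fdp_graph :: "'v set \<Rightarrow> 'v set set \<Rightarrow> ('v set \<Rightarrow> real) \<Rightarrow> 'v \<Rightarrow> bool" where
  "fdp_graph V E l dep \<longleftrightarrow> finite V \<and> dep \<in> V
     \<and> E \<subseteq> {{u, w} | u w. u \<in> V \<and> w \<in> V \<and> u \<noteq> w}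
     \<and> (\<forall>e\<in>E. l e > 0)
     \<and> (\<forall>u\<in>V. \<forall>w\<in>V. \<exists>ws. is_walk E ws \<and> hd ws = u \<and> last ws = w)"

definition is_trip_walk :: "'v set set \<Rightarrow> 'v \<Rightarrow> 'v list \<Rightarrow> bool" where
  "is_trip_walk E dep ws \<longleftrightarrow> is_walk E ws \<and> hd ws = dep \<and> last ws = dep
     \<and> (\<forall>j. 0 < j \<and> Suc j < length ws \<longrightarrow> ws ! j \<noteq> dep)"

type_synonym ('v, 'r) trip = "real \<times> 'v list \<times> 'r set"

definition valid_trip :: "'v set set \<Rightarrow> 'v \<Rightarrow> enat \<Rightarrow> ('r \<Rightarrow> real) \<Rightarrow> ('r \<Rightarrow> 'v)
    \<Rightarrow> 'r set \<Rightarrow> ('v, 'r) trip \<Rightarrow> bool" where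
  "valid_trip E dep c arr loc R tr \<longleftrightarrow>
     (case tr of (t, ws, S) \<Rightarrow> t \<ge> 0 \<and> is_trip_walk E dep ws \<and> S \<subseteq> R \<and> enat (card S) \<le> c
        \<and> (\<forall>\<rho>\<in>S. arr \<rho> \<le> t \<and> loc \<rho> \<in> set ws))"

definition trip_end :: "('v set \<Rightarrow> real) \<Rightarrow> ('v, 'r) trip \<Rightarrow> real" where
  "trip_end l tr = fst tr + walk_len l (fst (snd tr))"

definition first_visit :: "'v list \<Rightarrow> 'v \<Rightarrow> nat" where
  "first_visit ws v = (LEAST i. i < length ws \<and> ws ! i = v)"

definition visit_time :: "('v set \<Rightarrow> real) \<Rightarrow> ('v, 'r) trip \<Rightarrow> 'v \<Rightarrow> real" where
  "visit_time l tr v = fst tr + walk_len l (take (Suc (first_visit (fst (snd tr)) v)) (fst (snd tr)))"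

(* schedule: vehicle i (i < k) performs the trip sequence sched i *)
definition feasible_schedule :: "'v set set \<Rightarrow> ('v set \<Rightarrow> real) \<Rightarrow> 'v \<Rightarrow> nat \<Rightarrow> enat
    \<Rightarrow> ('r \<Rightarrow> real) \<Rightarrow> ('r \<Rightarrow> 'v) \<Rightarrow> 'r set \<Rightarrow> (nat \<Rightarrow> ('v, 'r) trip list) \<Rightarrow> bool" where
  "feasible_schedule E l dep k c arr loc R sched \<longleftrightarrow>
     (\<forall>i<k. \<forall>j<length (sched i). valid_trip E dep c arr loc R (sched i ! j))
     \<and> (\<forall>i<k. \<forall>j. Suc j < length (sched i) \<longrightarrow> trip_end l (sched i ! j) \<le> fst (sched i ! Suc j))
     \<and> (\<forall>\<rho>\<in>R. \<exists>!p. fst p < k \<and> snd p < length (sched (fst p))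
                     \<and> \<rho> \<in> snd (snd (sched (fst p) ! snd p)))"

definition serving_trip :: "nat \<Rightarrow> 'r \<Rightarrow> (nat \<Rightarrow> ('v, 'r) trip list) \<Rightarrow> nat \<times> nat" where
  "serving_trip k \<rho> sched = (THE p. fst p < k \<and> snd p < length (sched (fst p))
                     \<and> \<rho> \<in> snd (snd (sched (fst p) ! snd p)))"

definition service_time :: "('v set \<Rightarrow> real) \<Rightarrow> nat \<Rightarrow> ('r \<Rightarrow> 'v) \<Rightarrow> (nat \<Rightarrow> ('v, 'r) trip list) \<Rightarrow> 'r \<Rightarrow> real" where
  "service_time l k loc sched \<rho> =
     (let p = serving_trip k \<rho> sched in visit_time l (sched (fst p) ! snd p) (loc \<rho>))"

(* maximum flow time (flow times are nonnegative; 0 for an empty request set) *)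
definition max_flow_time :: "('v set \<Rightarrow> real) \<Rightarrow> nat \<Rightarrow> ('r \<Rightarrow> real) \<Rightarrow> ('r \<Rightarrow> 'v) \<Rightarrow> 'r set
    \<Rightarrow> (nat \<Rightarrow> ('v, 'r) trip list) \<Rightarrow> real" where
  "max_flow_time l k arr loc R sched =
     Max (insert 0 ((\<lambda>\<rho>. service_time l k loc sched \<rho> - arr \<rho>) ` R))"

definition fdp_opt :: "'v set set \<Rightarrow> ('v set \<Rightarrow> real) \<Rightarrow> 'v \<Rightarrow> nat \<Rightarrow> enat
    \<Rightarrow> ('r \<Rightarrow> real) \<Rightarrow> ('r \<Rightarrow> 'v) \<Rightarrow> 'r set \<Rightarrow> real" where
  "fdp_opt E l dep k c arr loc R =
     Inf {max_flow_time l k arr loc R sched | sched. feasible_schedule E l dep k c arr loc R sched}"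

(* CVRP: closed walk ws = (dep, u_1, ..., u_z, dep); Q j are the requests picked up at position j, 1 \<le> j \<le> z *)
definition cvrp_feasible :: "'v set set \<Rightarrow> 'v \<Rightarrow> enat \<Rightarrow> ('r \<Rightarrow> 'v) \<Rightarrow> 'r set
    \<Rightarrow> 'v list \<Rightarrow> (nat \<Rightarrow> 'r set) \<Rightarrow> bool" where
  "cvrp_feasible E dep c loc Rq ws Q \<longleftrightarrow>
     is_walk E ws \<and> hd ws = dep \<and> last ws = dep
     \<and> (\<forall>j\<in>{1..<length ws - 1}. \<forall>\<rho>\<in>Q j. loc \<rho> = ws ! j)
     \<and> (\<Union>j\<in>{1..<length ws - 1}. Q j) = Rq
     \<and> (\<forall>j\<in>{1..<length ws - 1}. \<forall>j'\<in>{1..<length ws - 1}. j \<noteq> j' \<longrightarrow> Q j \<inter> Q j' = {})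
     \<and> (\<forall>j j'. 1 \<le> j \<and> j \<le> j' \<and> j' < length ws - 1 \<and> (\<forall>i\<in>{j..j'}. ws ! i \<noteq> dep)
          \<longrightarrow> enat (card (\<Union>i\<in>{j..j'}. Q i)) \<le> c)"

definition cvrp_opt :: "'v set set \<Rightarrow> ('v set \<Rightarrow> real) \<Rightarrow> 'v \<Rightarrow> enat \<Rightarrow> ('r \<Rightarrow> 'v) \<Rightarrow> 'r set \<Rightarrow> real" where
  "cvrp_opt E l dep c loc Rq = Inf {walk_len l ws | ws Q. cvrp_feasible E dep c loc Rq ws Q}"

end

theory Submission
  imports Defs
begin

text \<open>Take any feasible schedule with maximum flow time \<open>M\<close> and fix a vehicle. Among its trips
  serving requests of \<open>R'\<close>, the ones from the first up to (excluding) the last start no earlier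
  than \<open>a\<close>, since they carry a request that has arrived, and end before the last one starts.
  The last one is cut short: it goes out to the latest first visit of a location of its
  \<open>R'\<close>-requests and returns the same way, a detour of length \<open>2p\<close>, where its start plus \<open>p\<close>
  is a service time, hence at most \<open>b + M\<close>, and \<open>p \<le> M\<close>. So every vehicle yields a closed
  walk of length at most \<open>b - a + 2M\<close> that serves its \<open>R'\<close>-requests within capacity, and the
  concatenation of the \<open>k\<close> walks is a CVRP tour for \<open>R'\<close>. Finally take the infimum over
  schedules, which exist because requests can be served one at a time.\<close>

lemma is_walk_Nil [simp]: "\<not> is_walk E []"
  by (simp add: is_walk_def)

lemma is_walk_singleton [simp]: "is_walk E [x]"
  by (simp add: is_walk_def)

lemma is_walk_Cons2 [simp]: "is_walk E (x # y # zs) \<longleftrightarrow> {x, y} \<in> E \<and> is_walk E (y # zs)"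
  by (auto simp: is_walk_def All_less_Suc2)

lemma walk_len_Nil [simp]: "walk_len l [] = 0"
  by (simp add: walk_len_def)

lemma walk_len_singleton [simp]: "walk_len l [x] = 0"
  by (simp add: walk_len_def)

lemma walk_len_Cons2 [simp]: "walk_len l (x # y # zs) = l {x, y} + walk_len l (y # zs)"
  by (simp add: walk_len_def sum.lessThan_Suc_shift del: sum.lessThan_Suc)

lemma is_walk_append_tl:
  "is_walk E xs \<Longrightarrow> is_walk E ys \<Longrightarrow> last xs = hd ys \<Longrightarrow> is_walk E (xs @ tl ys)"
proof (induction xs rule: induct_list012)
  case (2 x)
  then show ?case by (cases ys) auto
qed auto

lemma walk_len_append_tl:
  "xs \<noteq> [] \<Longrightarrow> ys \<noteq> [] \<Longrightarrow> last xs = hd ys \<Longrightarrow>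
    walk_len l (xs @ tl ys) = walk_len l xs + walk_len l ys"
  by (induction xs rule: induct_list012) (auto simp: neq_Nil_conv)

lemma is_walk_appendD1: "is_walk E (xs @ ys) \<Longrightarrow> xs \<noteq> [] \<Longrightarrow> is_walk E xs"
  by (induction xs rule: induct_list012) auto

lemma is_walk_appendD2: "is_walk E (xs @ ys) \<Longrightarrow> ys \<noteq> [] \<Longrightarrow> is_walk E ys"
  by (induction xs rule: induct_list012) (auto simp: neq_Nil_conv)

lemma rev_Cons2: "rev (x # y # zs) = rev (y # zs) @ tl [y, x]"
  by simp

lemma is_walk_rev: "is_walk E xs \<Longrightarrow> is_walk E (rev xs)"
proof (induction xs rule: induct_list012)
  case (3 x y zs)
  then have "is_walk E [y, x]"
    by (simp add: insert_commute)
  with 3 show ?case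
    unfolding rev_Cons2 by (intro is_walk_append_tl) (auto simp: hd_rev)
qed auto

lemma walk_len_rev: "walk_len l (rev xs) = walk_len l xs"
proof (induction xs rule: induct_list012)
  case (3 x y zs)
  then show ?case
    unfolding rev_Cons2 by (subst walk_len_append_tl) (auto simp: hd_rev insert_commute)
qed auto

lemma walk_len_nonneg: "is_walk E xs \<Longrightarrow> \<forall>e\<in>E. 0 < l e \<Longrightarrow> 0 \<le> walk_len l xs"
  by (induction xs rule: induct_list012) (auto intro: add_nonneg_nonneg less_imp_le)

lemma is_trip_walk_iff:
  "is_trip_walk E dep ws \<longleftrightarrow>
    is_walk E ws \<and> (ws = [dep] \<or> (\<exists>mid. ws = dep # mid @ [dep] \<and> dep \<notin> set mid))"
proof
  assume trip: "is_trip_walk E dep ws"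
  then have walk: "is_walk E ws" and ends: "hd ws = dep" "last ws = dep"
    and inner: "\<And>j. 0 < j \<Longrightarrow> Suc j < length ws \<Longrightarrow> ws ! j \<noteq> dep"
    by (auto simp: is_trip_walk_def)
  show "is_walk E ws \<and> (ws = [dep] \<or> (\<exists>mid. ws = dep # mid @ [dep] \<and> dep \<notin> set mid))"
  proof (cases "tl ws")
    case Nil
    with walk ends show ?thesis
      by (cases ws) auto
  next
    case (Cons y ys)
    then obtain mid where mid: "ws = dep # mid @ [dep]"
      using walk ends by (cases ws; cases ys rule: rev_cases) auto
    have "dep \<notin> set mid"
    proof
      assume "dep \<in> set mid"
      then obtain i where "i < length mid" "mid ! i = dep"
        by (auto simp: in_set_conv_nth)
      with inner[of "Suc i"] show False
        by (simp add: mid nth_append)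
    qed
    with walk mid show ?thesis
      by blast
  qed
next
  assume "is_walk E ws \<and> (ws = [dep] \<or> (\<exists>mid. ws = dep # mid @ [dep] \<and> dep \<notin> set mid))"
  then show "is_trip_walk E dep ws"
    by (auto simp: is_trip_walk_def nth_Cons' nth_append split: if_splits)
qed

definition out_and_back :: "'v list \<Rightarrow> 'v list" where
  "out_and_back ws = ws @ tl (rev ws)"

lemma set_out_and_back [simp]: "set (out_and_back ws) = set ws"
  by (cases ws rule: rev_cases) (auto simp: out_and_back_def)

lemma walk_len_out_and_back: "ws \<noteq> [] \<Longrightarrow> walk_len l (out_and_back ws) = 2 * walk_len l ws"
  by (simp add: out_and_back_def walk_len_append_tl hd_rev walk_len_rev)

lemma is_trip_walk_out_and_back:
  assumes "is_walk E (dep # ps)" "ps \<noteq> []" "dep \<notin> set ps"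
  shows "is_trip_walk E dep (out_and_back (dep # ps))"
proof -
  have "is_walk E (out_and_back (dep # ps))"
    unfolding out_and_back_def using assms(1)
    by (intro is_walk_append_tl is_walk_rev) (auto simp: hd_rev)
  moreover have "out_and_back (dep # ps) = dep # out_and_back ps @ [dep]"
    using assms(2) by (simp add: out_and_back_def)
  moreover have "dep \<notin> set (out_and_back ps)"
    using assms(3) by simp
  ultimately show ?thesis
    unfolding is_trip_walk_iff by metis
qed

lemma trip_walk_through:
  assumes "fdp_graph V E l dep" "v \<in> V" "v \<noteq> dep"
  obtains ws where "is_trip_walk E dep ws" "v \<in> set ws"
proof -
  obtain ws where ws: "is_walk E ws" "hd ws = dep" "last ws = v"
    using assms unfolding fdp_graph_def by blast
  then have "dep \<in> set ws"
    by (metis hd_in_set is_walk_Nil)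
  then obtain xs ys where split: "ws = xs @ dep # ys" "dep \<notin> set ys"
    by (metis split_list_last)
  with ws assms(3) have "ys \<noteq> []" "v \<in> set ys"
    by auto
  moreover have "is_walk E (dep # ys)"
    using ws split by (metis is_walk_appendD2 list.distinct(1))
  ultimately show thesis
    using that is_trip_walk_out_and_back split(2) by fastforce
qed

text \<open>CVRP solutions whose pickup sets \<open>Q j\<close> (see \<open>cvrp_feasible\<close>) are the fibres of a position
  map \<open>pos\<close>, so that disjointness and coverage are automatic.\<close>

definition cvrp_tour :: "'v set set \<Rightarrow> 'v \<Rightarrow> enat \<Rightarrow> ('r \<Rightarrow> 'v) \<Rightarrow> 'r set \<Rightarrow> 'v list \<Rightarrow> bool" where
  "cvrp_tour E dep c loc Rq ws \<longleftrightarrow> is_walk E ws \<and> hd ws = dep \<and> last ws = dep \<and>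
     (\<exists>pos. (\<forall>\<rho>\<in>Rq. pos \<rho> \<in> {1..<length ws - 1} \<and> ws ! pos \<rho> = loc \<rho>) \<and>
        (\<forall>j j'. j' < length ws \<longrightarrow> (\<forall>i\<in>{j..j'}. ws ! i \<noteq> dep) \<longrightarrow>
           enat (card {\<rho>\<in>Rq. pos \<rho> \<in> {j..j'}}) \<le> c))"

lemma cvrp_tour_imp_feasible:
  assumes "cvrp_tour E dep c loc Rq ws"
  obtains Q where "cvrp_feasible E dep c loc Rq ws Q"
proof -
  obtain pos where pos: "\<forall>\<rho>\<in>Rq. pos \<rho> \<in> {1..<length ws - 1} \<and> ws ! pos \<rho> = loc \<rho>"
    and cap: "\<forall>j j'. j' < length ws \<longrightarrow> (\<forall>i\<in>{j..j'}. ws ! i \<noteq> dep) \<longrightarrow>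
                enat (card {\<rho>\<in>Rq. pos \<rho> \<in> {j..j'}}) \<le> c"
    using assms unfolding cvrp_tour_def by blast
  define Q where "Q j = {\<rho>\<in>Rq. pos \<rho> = j}" for j
  have "(\<Union>i\<in>{j..j'}. Q i) = {\<rho>\<in>Rq. pos \<rho> \<in> {j..j'}}" for j j'
    by (auto simp: Q_def)
  with assms pos cap have "cvrp_feasible E dep c loc Rq ws Q"
    unfolding cvrp_feasible_def cvrp_tour_def by (auto simp: Q_def)
  then show thesis
    by (rule that)
qed

lemma cvrp_opt_le_walk_len:
  assumes "cvrp_tour E dep c loc Rq ws" "\<forall>e\<in>E. 0 < l e"
  shows "cvrp_opt E l dep c loc Rq \<le> walk_len l ws"
  unfolding cvrp_opt_def
proof (rule cInf_lower)
  show "walk_len l ws \<in> {walk_len l ws |ws Q. cvrp_feasible E dep c loc Rq ws Q}"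
    using cvrp_tour_imp_feasible[OF assms(1)] by blast
  show "bdd_below {walk_len l ws |ws Q. cvrp_feasible E dep c loc Rq ws Q}"
    using walk_len_nonneg assms(2) by (fastforce simp: cvrp_feasible_def intro: bdd_belowI)
qed

lemma cvrp_tour_closed:
  "cvrp_tour E dep c loc Rq ws \<Longrightarrow> ws \<noteq> [] \<and> hd ws = dep \<and> last ws = dep"
  by (auto simp: cvrp_tour_def)

lemma cvrp_tour_depot: "cvrp_tour E dep c loc {} [dep]"
  by (simp add: cvrp_tour_def zero_enat_def[symmetric])

lemma first_visit_nth:
  assumes "v \<in> set ws"
  shows "first_visit ws v < length ws" "ws ! first_visit ws v = v"
proof -
  obtain i where "i < length ws" "ws ! i = v"
    using assms by (auto simp: in_set_conv_nth)
  then show "first_visit ws v < length ws" "ws ! first_visit ws v = v"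
    unfolding first_visit_def by (metis (mono_tags, lifting) LeastI)+
qed

lemma enat_card_le_subset: "enat (card B) \<le> c \<Longrightarrow> finite B \<Longrightarrow> A \<subseteq> B \<Longrightarrow> enat (card A) \<le> c"
  by (meson card_mono enat_ord_simps(1) order_trans)

text \<open>Each request is picked up at the first visit of its location.\<close>

lemma cvrp_tour_closed_walk:
  assumes walk: "is_walk E ws" "hd ws = dep" "last ws = dep"
    and fin: "finite Rq" and cap: "enat (card Rq) \<le> c"
    and locs: "\<forall>\<rho>\<in>Rq. loc \<rho> \<in> set ws \<and> loc \<rho> \<noteq> dep"
  shows "cvrp_tour E dep c loc Rq ws"
proof -
  have "ws \<noteq> []"
    using walk by auto
  have "first_visit ws (loc \<rho>) \<in> {1..<length ws - 1} \<and> ws ! first_visit ws (loc \<rho>) = loc \<rho>"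
    if "\<rho> \<in> Rq" for \<rho>
  proof -
    let ?i = "first_visit ws (loc \<rho>)"
    have i: "?i < length ws" "ws ! ?i = loc \<rho>"
      using first_visit_nth[of "loc \<rho>" ws] locs that by auto
    moreover have "?i \<noteq> 0" "?i \<noteq> length ws - 1"
      using i locs that walk \<open>ws \<noteq> []\<close> by (metis hd_conv_nth last_conv_nth)+
    ultimately show ?thesis
      by auto
  qed
  moreover have "enat (card {\<rho>\<in>Rq. P \<rho>}) \<le> c" for P
    using cap fin by (rule enat_card_le_subset) auto
  ultimately show ?thesis
    unfolding cvrp_tour_def using walk by (intro conjI exI[of _ "\<lambda>\<rho>. first_visit ws (loc \<rho>)"]) auto
qed

lemma nth_append_tl_glued:
  assumes "xs \<noteq> []" "ys \<noteq> []" "last xs = hd ys" "j < length ys"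
  shows "(xs @ tl ys) ! (length xs - 1 + j) = ys ! j"
proof (cases j)
  case 0
  with assms show ?thesis
    by (simp add: nth_append last_conv_nth hd_conv_nth)
next
  case (Suc i)
  have "(xs @ tl ys) ! (length xs + i) = ys ! Suc i"
    using Suc assms(4) by (simp add: nth_append nth_tl)
  moreover have "length xs - 1 + j = length xs + i"
    using Suc assms(1) by simp
  ultimately show ?thesis
    using Suc by metis
qed

lemma depot_free_window_glued:
  assumes "xs \<noteq> []" "ys \<noteq> []" "last xs = hd ys"
    and "j' < length (xs @ tl ys)" and avoid: "\<forall>i\<in>{j..j'}. (xs @ tl ys) ! i \<noteq> hd ys"
  obtains "j' < length xs - 1" "\<forall>i\<in>{j..j'}. xs ! i \<noteq> hd ys"
  | "length xs - 1 < j" "j' - (length xs - 1) < length ys"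
    "\<forall>i\<in>{j - (length xs - 1)..j' - (length xs - 1)}. ys ! i \<noteq> hd ys"
proof -
  define d where "d = length xs - 1"
  have len: "length (xs @ tl ys) = d + length ys"
    using assms(1,2) by (simp add: d_def flip: length_greater_0_conv)
  have right: "(xs @ tl ys) ! (d + i) = ys ! i" if "i < length ys" for i
    unfolding d_def using assms(1-3) that by (rule nth_append_tl_glued)
  then have "d \<notin> {j..j'}"
    using avoid assms(2) by (metis add_0_right hd_conv_nth length_greater_0_conv)
  then consider "j' < d" | "d < j"
    by fastforce
  then show thesis
  proof cases
    case 1
    then have "(xs @ tl ys) ! i = xs ! i" if "i \<le> j'" for i
    proof -
      have "i < length xs"
        using 1 that by (simp add: d_def)
      then show ?thesis
        by (simp add: nth_append)
    qed
    then have "\<forall>i\<in>{j..j'}. xs ! i \<noteq> hd ys"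
      using avoid by auto
    with 1 that(1) show thesis
      by (simp add: d_def)
  next
    case 2
    have "\<forall>i\<in>{j - d..j' - d}. ys ! i \<noteq> hd ys"
    proof
      fix i
      assume "i \<in> {j - d..j' - d}"
      then have "d + i \<in> {j..j'}" "i < length ys"
        using 2 \<open>j' < length (xs @ tl ys)\<close> len by auto
      then show "ys ! i \<noteq> hd ys"
        using avoid right by metis
    qed
    moreover have "j' - d < length ys"
      using \<open>j' < length (xs @ tl ys)\<close> len assms(2) by (cases ys) auto
    ultimately show thesis
      using 2 that(2) by (simp add: d_def)
  qed
qed

text \<open>The requests of the second tour that are already served by the first one are dropped;
  this is why only the second request set has to be finite.\<close>

lemma cvrp_tour_append:
  assumes tour1: "cvrp_tour E dep c loc R1 ws1" and tour2: "cvrp_tour E dep c loc R2 ws2"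
    and fin: "finite R2"
  shows "cvrp_tour E dep c loc (R1 \<union> R2) (ws1 @ tl ws2)"
proof -
  obtain pos1 where pos1: "\<forall>\<rho>\<in>R1. pos1 \<rho> \<in> {1..<length ws1 - 1} \<and> ws1 ! pos1 \<rho> = loc \<rho>"
    and cap1: "\<forall>j j'. j' < length ws1 \<longrightarrow> (\<forall>i\<in>{j..j'}. ws1 ! i \<noteq> dep) \<longrightarrow>
                 enat (card {\<rho>\<in>R1. pos1 \<rho> \<in> {j..j'}}) \<le> c"
    using tour1 unfolding cvrp_tour_def by blast
  obtain pos2 where pos2: "\<forall>\<rho>\<in>R2. pos2 \<rho> \<in> {1..<length ws2 - 1} \<and> ws2 ! pos2 \<rho> = loc \<rho>"
    and cap2: "\<forall>j j'. j' < length ws2 \<longrightarrow> (\<forall>i\<in>{j..j'}. ws2 ! i \<noteq> dep) \<longrightarrow>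
                 enat (card {\<rho>\<in>R2. pos2 \<rho> \<in> {j..j'}}) \<le> c"
    using tour2 unfolding cvrp_tour_def by blast
  have walk1: "is_walk E ws1" "hd ws1 = dep" "last ws1 = dep" "ws1 \<noteq> []"
    and walk2: "is_walk E ws2" "hd ws2 = dep" "last ws2 = dep" "ws2 \<noteq> []"
    using tour1 tour2 by (auto simp: cvrp_tour_def)
  define ws where "ws = ws1 @ tl ws2"
  define d where "d = length ws1 - 1"
  define pos where "pos \<rho> = (if \<rho> \<in> R1 then pos1 \<rho> else d + pos2 \<rho>)" for \<rho>
  have "is_walk E ws" "hd ws = dep" "last ws = dep"
    using walk1 walk2 is_walk_append_tl[of E ws1 ws2]
    by (auto simp: ws_def last_append last_tl)
  moreover have "pos \<rho> \<in> {1..<length ws - 1} \<and> ws ! pos \<rho> = loc \<rho>" if "\<rho> \<in> R1 \<union> R2" for \<rho>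
  proof -
    have len1: "length ws1 = Suc d"
      using walk1(4) by (simp add: d_def)
    obtain n2 where len2: "length ws2 = Suc n2"
      using walk2(4) by (cases ws2) auto
    have "length ws = d + length ws2"
      using len1 len2 by (simp add: ws_def)
    moreover have "ws ! i = ws1 ! i" if "i < d" for i
      using that len1 by (simp add: ws_def nth_append)
    moreover have "ws ! (d + i) = ws2 ! i" if "i < length ws2" for i
      unfolding ws_def d_def using walk1 walk2 that by (intro nth_append_tl_glued) auto
    ultimately show ?thesis
      using that pos1 pos2 len1 len2 by (auto simp: pos_def)
  qed
  moreover have "enat (card {\<rho>\<in>R1 \<union> R2. pos \<rho> \<in> {j..j'}}) \<le> c"
    if "j' < length ws" and avoid: "\<forall>i\<in>{j..j'}. ws ! i \<noteq> dep" for j j'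
    using walk1(4) walk2(4) walk1(3)[folded walk2(2)] that[unfolded ws_def walk2(2)[symmetric]]
  proof (cases rule: depot_free_window_glued)
    case 1
    then have "{\<rho>\<in>R1 \<union> R2. pos \<rho> \<in> {j..j'}} = {\<rho>\<in>R1. pos1 \<rho> \<in> {j..j'}}"
      by (auto simp: pos_def d_def)
    with 1 cap1 walk2(2) show ?thesis
      by simp
  next
    case 2
    have "{\<rho>\<in>R1 \<union> R2. pos \<rho> \<in> {j..j'}} \<subseteq> {\<rho>\<in>R2. pos2 \<rho> \<in> {j - d..j' - d}}"
      using 2 pos1 by (auto simp: pos_def d_def)
    moreover have "enat (card {\<rho>\<in>R2. pos2 \<rho> \<in> {j - d..j' - d}}) \<le> c"
      using 2 cap2 walk2(2) by (simp add: d_def)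
    ultimately show ?thesis
      using fin by (simp add: enat_card_le_subset)
  qed
  ultimately show ?thesis
    unfolding cvrp_tour_def ws_def[symmetric] by blast
qed

definition concat_closed_walks :: "'v \<Rightarrow> 'v list list \<Rightarrow> 'v list" where
  "concat_closed_walks dep wss = foldr (\<lambda>ws acc. ws @ tl acc) wss [dep]"

lemma cvrp_tour_concat:
  assumes "\<forall>(ws, Rq)\<in>set P. finite Rq \<and> cvrp_tour E dep c loc Rq ws"
  shows "cvrp_tour E dep c loc (\<Union>(snd ` set P)) (concat_closed_walks dep (map fst P))"
  using assms
proof (induction P)
  case Nil
  show ?case
    by (simp add: concat_closed_walks_def cvrp_tour_depot)
next
  case (Cons p P)
  then have "cvrp_tour E dep c loc (snd p \<union> \<Union>(snd ` set P))
      (fst p @ tl (concat_closed_walks dep (map fst P)))"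
    by (intro cvrp_tour_append) auto
  then show ?case
    by (simp add: concat_closed_walks_def)
qed

lemma walk_len_concat_closed_walks:
  assumes "\<forall>ws\<in>set wss. ws \<noteq> [] \<and> hd ws = dep \<and> last ws = dep"
  shows "walk_len l (concat_closed_walks dep wss) = (\<Sum>ws\<leftarrow>wss. walk_len l ws)"
proof -
  have "concat_closed_walks dep wss \<noteq> [] \<and> hd (concat_closed_walks dep wss) = dep \<and>
      walk_len l (concat_closed_walks dep wss) = (\<Sum>ws\<leftarrow>wss. walk_len l ws)"
    using assms by (induction wss) (auto simp: concat_closed_walks_def walk_len_append_tl)
  then show ?thesis
    by blast
qed

lemma trip_walk_shortcut:
  assumes trip: "is_trip_walk E dep ws" and fin: "finite U" "U \<noteq> {}" and U: "U \<subseteq> set ws - {dep}"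
  obtains u where "u \<in> U"
    "is_trip_walk E dep (out_and_back (take (Suc (first_visit ws u)) ws))"
    "U \<subseteq> set (take (Suc (first_visit ws u)) ws)"
proof -
  define m where "m = Max (first_visit ws ` U)"
  obtain u where u: "u \<in> U" "first_visit ws u = m"
    using Max_in[of "first_visit ws ` U"] fin unfolding m_def
    by (metis finite_imageI image_iff image_is_empty)
  have m: "m < length ws" "ws ! m = u" "u \<noteq> dep"
    using first_visit_nth[of u ws] u U by auto
  have "ws \<noteq> [dep]"
    using u U by auto
  then obtain mid where mid: "ws = dep # mid @ [dep]" "dep \<notin> set mid"
    using trip unfolding is_trip_walk_iff by blast
  have "m \<noteq> 0"
    using m mid by (metis nth_Cons_0)
  moreover have "m \<noteq> Suc (length mid)" "length ws = Suc (Suc (length mid))"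
    using m by (auto simp: mid nth_append)
  ultimately have "0 < m" "m \<le> length mid"
    using m(1) by linarith+
  then have prefix: "take (Suc m) ws = dep # take m mid" "take m mid \<noteq> []"
    by (auto simp: mid)
  have "dep \<notin> set (take m mid)"
    using mid(2) by (meson in_set_takeD)
  have "is_walk E (take (Suc m) ws)"
    using is_walk_appendD1[of E "take (Suc m) ws" "drop (Suc m) ws"] trip prefix(1)
    by (metis append_take_drop_id is_trip_walk_def list.distinct(1))
  then have "is_trip_walk E dep (out_and_back (take (Suc m) ws))"
    unfolding prefix(1) using prefix(2) \<open>dep \<notin> set (take m mid)\<close>
    by (rule is_trip_walk_out_and_back)
  moreover have "v \<in> set (take (Suc m) ws)" if "v \<in> U" for v
  proof -
    have "first_visit ws v \<le> m"
      using fin that unfolding m_def by simp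
    then have "take (Suc m) ws ! first_visit ws v = v" "first_visit ws v < length (take (Suc m) ws)"
      using first_visit_nth[of v ws] U that by auto
    then show ?thesis
      by (metis nth_mem)
  qed
  ultimately show thesis
    using that u by blast
qed

lemma valid_trip_request:
  "valid_trip E dep c arr loc R tr \<Longrightarrow> \<rho> \<in> snd (snd tr) \<Longrightarrow> \<rho> \<in> R \<and> arr \<rho> \<le> fst tr"
  by (cases tr) (auto simp: valid_trip_def)

lemma valid_trip_cvrp_tour:
  assumes trip: "valid_trip E dep c arr loc R tr" and fin: "finite R"
    and off_depot: "\<forall>\<rho>\<in>R. loc \<rho> \<noteq> dep" and S: "S \<subseteq> snd (snd tr)"
  shows "cvrp_tour E dep c loc S (fst (snd tr))"
proof -
  obtain t ws S' where tr: "tr = (t, ws, S')"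
    by (cases tr)
  with trip have "is_trip_walk E dep ws" "S' \<subseteq> R" "enat (card S') \<le> c" "\<forall>\<rho>\<in>S'. loc \<rho> \<in> set ws"
    by (auto simp: valid_trip_def)
  with S fin off_depot show ?thesis
    unfolding tr by (intro cvrp_tour_closed_walk)
      (auto simp: is_trip_walk_def intro: enat_card_le_subset finite_subset)
qed

lemma valid_trip_shortcut:
  assumes trip: "valid_trip E dep c arr loc R tr" and fin: "finite R"
    and off_depot: "\<forall>\<rho>\<in>R. loc \<rho> \<noteq> dep" and S: "S \<subseteq> snd (snd tr)" "S \<noteq> {}"
  obtains ws \<rho> where "\<rho> \<in> S" "cvrp_tour E dep c loc S ws"
    "walk_len l ws = 2 * (visit_time l tr (loc \<rho>) - fst tr)"
proof -
  obtain t W S' where tr: "tr = (t, W, S')"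
    by (cases tr)
  with trip have W: "is_trip_walk E dep W" and "S' \<subseteq> R" "enat (card S') \<le> c"
    and locs: "\<forall>\<rho>\<in>S'. loc \<rho> \<in> set W"
    by (auto simp: valid_trip_def)
  have "finite S'" "S \<subseteq> S'"
    using \<open>S' \<subseteq> R\<close> fin S by (auto simp: tr intro: finite_subset)
  then have finS: "finite S" and capS: "enat (card S) \<le> c"
    using \<open>enat (card S') \<le> c\<close> by (auto intro: enat_card_le_subset finite_subset)
  have "finite (loc ` S)" "loc ` S \<noteq> {}" "loc ` S \<subseteq> set W - {dep}"
    using finS S locs off_depot \<open>S' \<subseteq> R\<close> by (auto simp: tr)
  with W obtain u where "u \<in> loc ` S"
    and trip': "is_trip_walk E dep (out_and_back (take (Suc (first_visit W u)) W))"
    and cover: "loc ` S \<subseteq> set (take (Suc (first_visit W u)) W)"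
    by (rule trip_walk_shortcut)
  then obtain \<rho> where "\<rho> \<in> S" "u = loc \<rho>"
    by blast
  let ?ws = "out_and_back (take (Suc (first_visit W u)) W)"
  have "cvrp_tour E dep c loc S ?ws"
    using trip' finS capS cover S off_depot \<open>S' \<subseteq> R\<close>
    by (intro cvrp_tour_closed_walk) (auto simp: is_trip_walk_def tr)
  moreover have "walk_len l ?ws = 2 * (visit_time l tr (loc \<rho>) - fst tr)"
  proof -
    have "W \<noteq> []"
      using W by (auto simp: is_trip_walk_def)
    then show ?thesis
      using \<open>u = loc \<rho>\<close> by (simp add: walk_len_out_and_back visit_time_def tr)
  qed
  ultimately show thesis
    using that \<open>\<rho> \<in> S\<close> by blast
qed

lemma walk_len_sum_le_start_diff:
  assumes seq: "\<forall>j. Suc j < length ts \<longrightarrow> trip_end l (ts ! j) \<le> fst (ts ! Suc j)"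
    and "j1 \<le> jm" "jm < length ts"
  shows "(\<Sum>j = j1..<jm. walk_len l (fst (snd (ts ! j)))) \<le> fst (ts ! jm) - fst (ts ! j1)"
  using assms(2,3)
proof (induction jm rule: dec_induct)
  case (step j)
  then have "trip_end l (ts ! j) \<le> fst (ts ! Suc j)"
    using seq by blast
  with step show ?case
    by (simp add: trip_end_def)
qed simp

lemma UN_atLeastAtMost_Min_Max:
  fixes S :: "nat \<Rightarrow> 'a set"
  assumes "{j. j < n \<and> S j \<noteq> {}} \<noteq> {}"
  shows "(\<Union>j\<in>{Min {j. j < n \<and> S j \<noteq> {}}..Max {j. j < n \<and> S j \<noteq> {}}}. S j) = (\<Union>j<n. S j)"
proof -
  let ?J = "{j. j < n \<and> S j \<noteq> {}}"
  have "finite ?J"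
    by simp
  then have "Max ?J \<in> ?J"
    using assms by (rule Max_in)
  show ?thesis
  proof (intro equalityI subsetI)
    fix \<sigma>
    assume "\<sigma> \<in> (\<Union>j\<in>{Min ?J..Max ?J}. S j)"
    then obtain j where "j \<le> Max ?J" "\<sigma> \<in> S j"
      by auto
    moreover have "Max ?J < n"
      using \<open>Max ?J \<in> ?J\<close> by simp
    ultimately show "\<sigma> \<in> (\<Union>j<n. S j)"
      by (meson UN_I lessThan_iff order.strict_trans1)
  next
    fix \<sigma>
    assume "\<sigma> \<in> (\<Union>j<n. S j)"
    then obtain j where "j \<in> ?J" "\<sigma> \<in> S j"
      by auto
    with \<open>finite ?J\<close> show "\<sigma> \<in> (\<Union>j\<in>{Min ?J..Max ?J}. S j)"
      by (meson Max_ge Min_le UN_I atLeastAtMost_iff)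
  qed
qed

lemma trip_range_cvrp_tour:
  fixes ts :: "('v, 'r) trip list"
  assumes valid: "\<forall>j<length ts. valid_trip E dep c arr loc R (ts ! j)"
    and seq: "\<forall>j. Suc j < length ts \<longrightarrow> trip_end l (ts ! j) \<le> fst (ts ! Suc j)"
    and fin: "finite R" and off_depot: "\<forall>\<rho>\<in>R. loc \<rho> \<noteq> dep"
    and "j1 \<le> jm" "jm < length ts" and S: "\<And>j. S j \<subseteq> snd (snd (ts ! j))"
    and TW: "cvrp_tour E dep c loc (S jm) TW"
  obtains ws where "cvrp_tour E dep c loc (\<Union>j\<in>{j1..jm}. S j) ws"
    "walk_len l ws \<le> fst (ts ! jm) - fst (ts ! j1) + walk_len l TW"
proof -
  define P where "P = map (\<lambda>j. (fst (snd (ts ! j)), S j)) [j1..<jm] @ [(TW, S jm)]"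
  have "finite (S j) \<and> cvrp_tour E dep c loc (S j) (fst (snd (ts ! j)))" if "j < length ts" for j
  proof
    have trip: "valid_trip E dep c arr loc R (ts ! j)"
      using valid that by simp
    have "S j \<subseteq> R"
      using S valid_trip_request[OF trip] by blast
    with fin show "finite (S j)"
      by (rule finite_subset[rotated])
    show "cvrp_tour E dep c loc (S j) (fst (snd (ts ! j)))"
      using trip fin off_depot S by (rule valid_trip_cvrp_tour)
  qed
  then have tours: "\<forall>(ws, Rq)\<in>set P. finite Rq \<and> cvrp_tour E dep c loc Rq ws"
    using TW \<open>jm < length ts\<close> by (auto simp: P_def)
  have "\<Union>(snd ` set P) = (\<Union>j\<in>{j1..jm}. S j)"
    using \<open>j1 \<le> jm\<close> by (auto simp: P_def le_less)
  then have tour: "cvrp_tour E dep c loc (\<Union>j\<in>{j1..jm}. S j) (concat_closed_walks dep (map fst P))"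
    using cvrp_tour_concat[OF tours] by simp
  have "\<forall>ws\<in>set (map fst P). ws \<noteq> [] \<and> hd ws = dep \<and> last ws = dep"
    using tours cvrp_tour_closed by fastforce
  then have "walk_len l (concat_closed_walks dep (map fst P)) = (\<Sum>ws\<leftarrow>map fst P. walk_len l ws)"
    by (rule walk_len_concat_closed_walks)
  also have "\<dots> = (\<Sum>j = j1..<jm. walk_len l (fst (snd (ts ! j)))) + walk_len l TW"
    by (simp add: P_def interv_sum_list_conv_sum_set_nat o_def)
  also have "\<dots> \<le> fst (ts ! jm) - fst (ts ! j1) + walk_len l TW"
    using walk_len_sum_le_start_diff[OF seq \<open>j1 \<le> jm\<close> \<open>jm < length ts\<close>] by simp
  finally show thesis
    by (rule that[OF tour])
qed

lemma trip_sequence_cvrp_tour: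
  fixes ts :: "('v, 'r) trip list"
  assumes valid: "\<forall>j<length ts. valid_trip E dep c arr loc R (ts ! j)"
    and seq: "\<forall>j. Suc j < length ts \<longrightarrow> trip_end l (ts ! j) \<le> fst (ts ! Suc j)"
    and fin: "finite R" and off_depot: "\<forall>\<rho>\<in>R. loc \<rho> \<noteq> dep"
    and window: "\<forall>\<rho>\<in>R'. a \<le> arr \<rho> \<and> arr \<rho> \<le> b"
    and flow: "\<forall>j<length ts. \<forall>\<rho>\<in>snd (snd (ts ! j)) \<inter> R'. visit_time l (ts ! j) (loc \<rho>) - arr \<rho> \<le> M"
    and "0 \<le> M" "a \<le> b"
  obtains ws where "cvrp_tour E dep c loc {\<rho>\<in>R'. \<exists>j<length ts. \<rho> \<in> snd (snd (ts ! j))} ws"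
    "walk_len l ws \<le> b - a + 2 * M"
proof -
  define S where "S j = snd (snd (ts ! j)) \<inter> R'" for j
  define J where "J = {j. j < length ts \<and> S j \<noteq> {}}"
  have request: "\<rho> \<in> R \<and> arr \<rho> \<le> fst (ts ! j)" if "j < length ts" "\<rho> \<in> snd (snd (ts ! j))" for j \<rho>
    using valid_trip_request[of E dep c arr loc R "ts ! j"] valid that by simp
  show thesis
  proof (cases "J = {}")
    case True
    then have none_served: "{\<rho>\<in>R'. \<exists>j<length ts. \<rho> \<in> snd (snd (ts ! j))} = {}"
      by (auto simp: J_def S_def)
    show thesis
    proof (rule that)
      show "cvrp_tour E dep c loc {\<rho>\<in>R'. \<exists>j<length ts. \<rho> \<in> snd (snd (ts ! j))} [dep]"
        unfolding none_served by (rule cvrp_tour_depot)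
      show "walk_len l [dep] \<le> b - a + 2 * M"
        using \<open>0 \<le> M\<close> \<open>a \<le> b\<close> by simp
    qed
  next
    case False
    define j1 where "j1 = Min J"
    define jm where "jm = Max J"
    have "finite J"
      by (simp add: J_def)
    with False have "j1 \<in> J" "jm \<in> J"
      by (simp_all add: j1_def jm_def)
    have "j1 \<le> jm"
      using Min_le[OF \<open>finite J\<close> \<open>jm \<in> J\<close>] by (simp add: j1_def)
    have "jm < length ts"
      using \<open>jm \<in> J\<close> by (simp add: J_def)
    have last_trip: "valid_trip E dep c arr loc R (ts ! jm)" "S jm \<subseteq> snd (snd (ts ! jm))" "S jm \<noteq> {}"
      using valid \<open>jm \<in> J\<close> by (auto simp: S_def J_def)
    obtain TW \<rho> where "\<rho> \<in> S jm" and TW: "cvrp_tour E dep c loc (S jm) TW"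
      and TW_len: "walk_len l TW = 2 * (visit_time l (ts ! jm) (loc \<rho>) - fst (ts ! jm))"
      using last_trip(1) fin off_depot last_trip(2,3) by (rule valid_trip_shortcut)
    have S_sub: "S j \<subseteq> snd (snd (ts ! j))" for j
      by (simp add: S_def)
    obtain ws where tour: "cvrp_tour E dep c loc (\<Union>j\<in>{j1..jm}. S j) ws"
      and len: "walk_len l ws \<le> fst (ts ! jm) - fst (ts ! j1) + walk_len l TW"
      using valid seq fin off_depot \<open>j1 \<le> jm\<close> \<open>jm < length ts\<close> S_sub TW
      by (rule trip_range_cvrp_tour)
    have "(\<Union>j\<in>{j1..jm}. S j) = (\<Union>j<length ts. S j)"
      using False unfolding j1_def jm_def J_def by (rule UN_atLeastAtMost_Min_Max)
    also have "\<dots> = {\<rho>\<in>R'. \<exists>j<length ts. \<rho> \<in> snd (snd (ts ! j))}"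
      by (auto simp: S_def)
    finally have "(\<Union>j\<in>{j1..jm}. S j) = {\<rho>\<in>R'. \<exists>j<length ts. \<rho> \<in> snd (snd (ts ! j))}" .
    moreover have "a \<le> fst (ts ! j1)"
      using \<open>j1 \<in> J\<close> window request by (force simp: J_def S_def)
    moreover have "visit_time l (ts ! jm) (loc \<rho>) - arr \<rho> \<le> M"
      using flow \<open>jm < length ts\<close> \<open>\<rho> \<in> S jm\<close> unfolding S_def by blast
    moreover have "arr \<rho> \<le> fst (ts ! jm)" "arr \<rho> \<le> b"
      using request[of jm \<rho>] window \<open>\<rho> \<in> S jm\<close> \<open>jm < length ts\<close> by (auto simp: S_def)
    ultimately show thesis
      using that tour len TW_len by (simp add: algebra_simps)
  qed
qed

lemma service_time_eq_visit_time:
  assumes "feasible_schedule E l dep k c arr loc R sched" "\<rho> \<in> R"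
    and "i < k" "j < length (sched i)" "\<rho> \<in> snd (snd (sched i ! j))"
  shows "service_time l k loc sched \<rho> = visit_time l (sched i ! j) (loc \<rho>)"
proof -
  have "\<exists>!p. fst p < k \<and> snd p < length (sched (fst p)) \<and> \<rho> \<in> snd (snd (sched (fst p) ! snd p))"
    using assms(1,2) unfolding feasible_schedule_def by blast
  then have "serving_trip k \<rho> sched = (i, j)"
    unfolding serving_trip_def by (rule the1_equality) (use assms(3-5) in simp)
  then show ?thesis
    by (simp add: service_time_def)
qed

lemma flow_time_le_max_flow_time:
  "finite R \<Longrightarrow> \<rho> \<in> R \<Longrightarrow> service_time l k loc sched \<rho> - arr \<rho> \<le> max_flow_time l k arr loc R sched"
  by (simp add: max_flow_time_def)

lemma max_flow_time_nonneg: "finite R \<Longrightarrow> 0 \<le> max_flow_time l k arr loc R sched"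
  by (simp add: max_flow_time_def)

lemma cvrp_opt_le_max_flow_time:
  assumes lpos: "\<forall>e\<in>E. 0 < l e" and sched: "feasible_schedule E l dep k c arr loc R sched"
    and fin: "finite R" and off_depot: "\<forall>\<rho>\<in>R. loc \<rho> \<noteq> dep" and "a \<le> b"
  shows "cvrp_opt E l dep c loc {\<rho>\<in>R. a \<le> arr \<rho> \<and> arr \<rho> \<le> b}
    \<le> real k * (b - a + 2 * max_flow_time l k arr loc R sched)"
proof -
  define M where "M = max_flow_time l k arr loc R sched"
  define R' where "R' = {\<rho>\<in>R. a \<le> arr \<rho> \<and> arr \<rho> \<le> b}"
  define served where "served i = {\<rho>\<in>R'. \<exists>j<length (sched i). \<rho> \<in> snd (snd (sched i ! j))}" for i
  have window: "\<forall>\<rho>\<in>R'. a \<le> arr \<rho> \<and> arr \<rho> \<le> b"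
    by (simp add: R'_def)
  have "0 \<le> M"
    unfolding M_def using fin by (rule max_flow_time_nonneg)
  have "\<exists>ws. cvrp_tour E dep c loc (served i) ws \<and> walk_len l ws \<le> b - a + 2 * M" if "i < k" for i
  proof -
    have valid: "\<forall>j<length (sched i). valid_trip E dep c arr loc R (sched i ! j)"
      and seq: "\<forall>j. Suc j < length (sched i) \<longrightarrow> trip_end l (sched i ! j) \<le> fst (sched i ! Suc j)"
      using sched that by (simp_all add: feasible_schedule_def)
    have flow: "\<forall>j<length (sched i). \<forall>\<rho>\<in>snd (snd (sched i ! j)) \<inter> R'.
        visit_time l (sched i ! j) (loc \<rho>) - arr \<rho> \<le> M"
      using service_time_eq_visit_time[OF sched] flow_time_le_max_flow_time[OF fin, of _ l k loc sched arr]
        that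
      by (fastforce simp: M_def R'_def)
    obtain ws where "cvrp_tour E dep c loc (served i) ws" "walk_len l ws \<le> b - a + 2 * M"
      using valid seq fin off_depot window flow \<open>0 \<le> M\<close> \<open>a \<le> b\<close> unfolding served_def
      by (rule trip_sequence_cvrp_tour)
    then show ?thesis
      by blast
  qed
  then obtain tour where tour: "\<And>i. i < k \<Longrightarrow> cvrp_tour E dep c loc (served i) (tour i)"
    and tour_len: "\<And>i. i < k \<Longrightarrow> walk_len l (tour i) \<le> b - a + 2 * M"
    by metis
  define P where "P = map (\<lambda>i. (tour i, served i)) [0..<k]"
  have "(\<Union>i<k. served i) = R'"
    using sched by (fastforce simp: served_def R'_def feasible_schedule_def)
  then have "cvrp_tour E dep c loc R' (concat_closed_walks dep (map fst P))"
    using cvrp_tour_concat[of P] tour fin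
    by (auto simp: P_def served_def R'_def atLeast0LessThan intro: finite_subset)
  then have "cvrp_opt E l dep c loc R' \<le> walk_len l (concat_closed_walks dep (map fst P))"
    using lpos by (rule cvrp_opt_le_walk_len)
  also have "\<dots> = (\<Sum>ws\<leftarrow>map fst P. walk_len l ws)"
    using tour[THEN cvrp_tour_closed] by (intro walk_len_concat_closed_walks) (auto simp: P_def)
  also have "\<dots> = (\<Sum>i<k. walk_len l (tour i))"
    by (simp add: P_def interv_sum_list_conv_sum_set_nat atLeast0LessThan o_def)
  also have "\<dots> \<le> real k * (b - a + 2 * M)"
    using sum_bounded_above[of "{..<k}" "\<lambda>i. walk_len l (tour i)"] tour_len by simp
  finally show ?thesis
    by (simp add: R'_def M_def)
qed

text \<open>Vehicle \<open>0\<close> serves the requests one at a time after the last arrival, each on a round trip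
  through its location; the trips are spaced by the total length \<open>L\<close> of all these round trips.\<close>

lemma feasible_schedule_exists:
  fixes V :: "'v set" and R :: "'r set"
  assumes graph: "fdp_graph V E l dep" and "1 \<le> k" "0 < c" and fin: "finite R"
    and locs: "\<forall>\<rho>\<in>R. loc \<rho> \<in> V - {dep}"
  obtains sched where "feasible_schedule E l dep k c arr loc R sched"
proof -
  obtain rs where rs: "set rs = R" "distinct rs"
    using finite_distinct_list[OF fin] by blast
  have "\<forall>\<rho>\<in>R. \<exists>ws. is_trip_walk E dep ws \<and> loc \<rho> \<in> set ws"
    using trip_walk_through[OF graph] locs by (metis DiffD1 DiffD2 singletonI)
  then obtain W where W: "\<And>\<rho>. \<rho> \<in> R \<Longrightarrow> is_trip_walk E dep (W \<rho>) \<and> loc \<rho> \<in> set (W \<rho>)"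
    by metis
  have W_nonneg: "0 \<le> walk_len l (W \<rho>)" if "\<rho> \<in> R" for \<rho>
    using graph W[OF that] walk_len_nonneg by (auto simp: fdp_graph_def is_trip_walk_def)
  define t0 where "t0 = Max (insert 0 (arr ` R))"
  define L where "L = (\<Sum>\<rho>\<in>R. walk_len l (W \<rho>))"
  have "0 \<le> t0" "\<forall>\<rho>\<in>R. arr \<rho> \<le> t0"
    using fin by (auto simp: t0_def)
  have "0 \<le> L" and W_le: "\<And>\<rho>. \<rho> \<in> R \<Longrightarrow> walk_len l (W \<rho>) \<le> L"
    using fin W_nonneg by (auto simp: L_def intro: sum_nonneg member_le_sum)
  define trip where "trip n = (t0 + real n * L, W (rs ! n), {rs ! n})" for n
  define sched :: "nat \<Rightarrow> ('v, 'r) trip list" where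
    "sched i = (if i = 0 then map trip [0..<length rs] else [])" for i
  have rs_R: "rs ! n \<in> R" if "n < length rs" for n
    using rs that by auto
  moreover have "enat (card {\<rho>}) \<le> c" for \<rho> :: 'r
    using \<open>0 < c\<close> by (cases c) (auto simp: zero_enat_def one_enat_def)
  ultimately have "valid_trip E dep c arr loc R (trip n)" if "n < length rs" for n
    using that W \<open>0 \<le> t0\<close> \<open>0 \<le> L\<close> \<open>\<forall>\<rho>\<in>R. arr \<rho> \<le> t0\<close>
    by (auto simp: valid_trip_def trip_def intro: order_trans[of _ t0])
  moreover have "trip_end l (trip n) \<le> fst (trip (Suc n))" if "Suc n < length rs" for n
    using W_le[OF rs_R, of n] that by (simp add: trip_end_def trip_def algebra_simps)
  moreover have "\<exists>!p. fst p < k \<and> snd p < length (sched (fst p)) \<and> \<rho> \<in> snd (snd (sched (fst p) ! snd p))"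
    if "\<rho> \<in> R" for \<rho>
  proof -
    obtain n where n: "n < length rs" "rs ! n = \<rho>"
      using rs \<open>\<rho> \<in> R\<close> by (auto simp: in_set_conv_nth)
    show ?thesis
    proof (rule ex1I[of _ "(0, n)"])
      show "fst (0, n) < k \<and> snd (0, n) < length (sched (fst (0::nat, n)))
          \<and> \<rho> \<in> snd (snd (sched (fst (0::nat, n)) ! snd (0::nat, n)))"
        using \<open>1 \<le> k\<close> n by (simp add: sched_def trip_def)
    next
      fix p :: "nat \<times> nat"
      assume "fst p < k \<and> snd p < length (sched (fst p)) \<and> \<rho> \<in> snd (snd (sched (fst p) ! snd p))"
      then have "fst p = 0" "snd p < length rs" "rs ! snd p = rs ! n"
        using n by (auto simp: sched_def trip_def split: if_splits)
      then show "p = (0, n)"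
        using n rs(2) by (metis nth_eq_iff_index_eq prod.collapse)
    qed
  qed
  ultimately have "feasible_schedule E l dep k c arr loc R sched"
    by (auto simp: feasible_schedule_def sched_def)
  then show thesis
    by (rule that)
qed

lemma le_affine_Inf:
  fixes X :: "real set"
  assumes "X \<noteq> {}" "0 < k" "\<And>x. x \<in> X \<Longrightarrow> C \<le> k * (d + 2 * x)"
  shows "C \<le> k * (d + 2 * Inf X)"
proof -
  have "(C / k - d) / 2 \<le> Inf X"
    using assms by (intro cInf_greatest) (auto simp: field_simps)
  with \<open>0 < k\<close> show ?thesis
    by (simp add: field_simps)
qed

theorem lemma5p1:
  fixes V :: "'v set" and E :: "'v set set" and l :: "'v set \<Rightarrow> real" and dep :: 'v
    and k :: nat and c :: enat and R :: "'r set" and arr :: "'r \<Rightarrow> real" and loc :: "'r \<Rightarrow> 'v"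
    and F a b :: real
  assumes "fdp_graph V E l dep"
    and "k \<ge> 1" and "c > 0"
    and "finite R" and "\<forall>\<rho>\<in>R. arr \<rho> \<ge> 0 \<and> loc \<rho> \<in> V - {dep}"
    and "F \<ge> fdp_opt E l dep k c arr loc R"
    and "a \<le> b"
  shows "cvrp_opt E l dep c loc {\<rho>\<in>R. a \<le> arr \<rho> \<and> arr \<rho> \<le> b} \<le> real k * (b - a + 2 * F)"
proof -
  let ?C = "cvrp_opt E l dep c loc {\<rho>\<in>R. a \<le> arr \<rho> \<and> arr \<rho> \<le> b}"
  define X where
    "X = {max_flow_time l k arr loc R sched | sched. feasible_schedule E l dep k c arr loc R sched}"
  have "\<forall>\<rho>\<in>R. loc \<rho> \<in> V - {dep}" "\<forall>\<rho>\<in>R. loc \<rho> \<noteq> dep" "\<forall>e\<in>E. 0 < l e"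
    using assms(1,5) by (auto simp: fdp_graph_def)
  obtain sched where "feasible_schedule E l dep k c arr loc R sched"
    using assms(1-4) \<open>\<forall>\<rho>\<in>R. loc \<rho> \<in> V - {dep}\<close> by (rule feasible_schedule_exists)
  then have "X \<noteq> {}"
    unfolding X_def by blast
  have "?C \<le> real k * (b - a + 2 * Inf X)"
  proof (rule le_affine_Inf)
    fix x
    assume "x \<in> X"
    then show "?C \<le> real k * (b - a + 2 * x)"
      using cvrp_opt_le_max_flow_time[OF \<open>\<forall>e\<in>E. 0 < l e\<close> _ assms(4)
          \<open>\<forall>\<rho>\<in>R. loc \<rho> \<noteq> dep\<close> assms(7)]
      by (auto simp: X_def)
  qed (use \<open>X \<noteq> {}\<close> assms(2) in auto)
  also have "\<dots> \<le> real k * (b - a + 2 * F)"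
    using assms(6) by (intro mult_left_mono) (auto simp: fdp_opt_def X_def)
  finally show ?thesis .
qed

end
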